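(* Let $p>1$ and $h\in C[0,\infty)$ with $h(s)>0$ for $s>0$. Suppose that the equation $w''+h(s)|w|^{p-1}w=0$ has two solutions $\underline{w},\overline{w}$ on $[0,\infty)$ with $\underline{w}(0)=\overline{w}(0)=0$, $0<\underline{w}'(0)<\overline{w}'(0)$, and $\underline{w}(s)>0$, $\overline{w}(s)>0$ for $s>0$. Assume moreover that this equation has a solution $w$ with $w(0)=0$, $\underline{w}'(0)<w'(0)<\overline{w}'(0)$, $w(s)>0$ for $0<s<s_0$ and $w(s_0)=0$ for some $s_0>0$. Then for all sufficiently large $c>0$ the problem \[ w''+h(s)|w|^{p-1}w=0\ (0<s<c),\quad w(0)=w(c)=0,\quad w(s)>0\ (0<s<c), \] has two solutions $w_1,w_2$ with $\underline{w}'(0)<w_1'(0)<w'(0)<w_2'(0)<\overline{w}'(0)$. *)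

theory Defs
  imports "HOL-Analysis.Analysis"
begin

definition nl :: "(real \<Rightarrow> real) \<Rightarrow> real \<Rightarrow> real \<Rightarrow> real \<Rightarrow> real" where
  "nl h p s x = h s * (\<bar>x\<bar> powr (p - 1) * x)"

definition ode_sol :: "(real \<Rightarrow> real) \<Rightarrow> real \<Rightarrow> real set \<Rightarrow> (real \<Rightarrow> real) \<Rightarrow> (real \<Rightarrow> real) \<Rightarrow> bool" where
  "ode_sol h p I w dw \<longleftrightarrow>
     (\<forall>s\<in>I. (w has_real_derivative dw s) (at s within I) \<and>
             (dw has_real_derivative (- nl h p s (w s))) (at s within I))"

end

theory Submission
  imports Defs
begin

(* Replace the nonlinearity by h t * max 0 (min M x) powr p, which is globally Lipschitz in x.
   The shooting problem v'' = - f(t, v), v 0 = 0, v' 0 = a then has a unique solution sol a on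
   [0, c], a fixed point of the Picard map in a weighted sup norm, and sol a c is Lipschitz in a.
   As f is nonnegative, all these solutions are concave.  Fix c > s0 and M = dwu 0 * c.  By
   concavity the given solutions stay below dwu 0 * t <= M, so uniqueness identifies them with
   shooting solutions: sol a c > 0 for a = dwl 0 and a = dwu 0, whereas sol (dw 0) vanishes at s0
   and hence, being concave, is negative at c.  The intermediate value theorem gives zeros
   a1 < dw 0 < a2 of a |-> sol a c; concavity makes sol a1 and sol a2 positive on (0, c) and
   bounded by dwu 0 * c = M, so the truncation is inactive and they solve the original problem. *)

lemma mvt_real_within:
  fixes f f' :: "real \<Rightarrow> real"
  assumes "a < b" "{a..b} \<subseteq> S"
    and "\<And>t. t \<in> {a..b} \<Longrightarrow> (f has_real_derivative f' t) (at t within S)"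
  obtains t where "t \<in> {a<..<b}" "f b - f a = f' t * (b - a)"
proof -
  have "(f has_derivative (*) (f' t)) (at t within {a..b})" if "a \<le> t" "t \<le> b" for t
    using assms(2,3) that by (auto simp: has_field_derivative_def[symmetric] intro: DERIV_subset)
  from mvt_simple[OF assms(1) this] that show ?thesis by auto
qed

lemma deriv_nonneg_imp_le:
  fixes f f' :: "real \<Rightarrow> real"
  assumes "x \<le> y" "{x..y} \<subseteq> S"
    and "\<And>t. t \<in> {x..y} \<Longrightarrow> (f has_real_derivative f' t) (at t within S)"
    and "\<And>t. t \<in> {x..y} \<Longrightarrow> 0 \<le> f' t"
  shows "f x \<le> f y"
proof (cases "x = y")
  case False
  with assms(1) have "x < y" by simp
  then obtain t where "t \<in> {x<..<y}" "f y - f x = f' t * (y - x)"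
    using assms(2,3) by (rule mvt_real_within)
  moreover have "0 \<le> f' t * (y - x)"
    using assms(4)[of t] \<open>t \<in> {x<..<y}\<close> \<open>x < y\<close> by simp
  ultimately show ?thesis by simp
qed simp

lemma deriv_eq_imp_eq_on_Icc:
  fixes f g f' :: "real \<Rightarrow> real"
  assumes "\<And>t. t \<in> {a..b} \<Longrightarrow> (f has_real_derivative f' t) (at t within {a..b})"
    and "\<And>t. t \<in> {a..b} \<Longrightarrow> (g has_real_derivative f' t) (at t within {a..b})"
    and "f a = g a" "t \<in> {a..b}"
  shows "f t = g t"
proof -
  have "((\<lambda>t. f t - g t) has_real_derivative 0) (at t within {a..b})" if "t \<in> {a..b}" for t
    using DERIV_diff[OF assms(1,2)[OF that]] by simp
  then obtain c where c: "\<And>t. t \<in> {a..b} \<Longrightarrow> f t - g t = c"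
    using has_field_derivative_zero_constant[of "{a..b}" "\<lambda>t. f t - g t"] by blast
  have "a \<in> {a..b}" using assms(4) by auto
  then show ?thesis using c[of a] c[OF assms(4)] assms(3) by simp
qed

lemma exp_weighted_integral_bound:
  fixes \<phi> :: "real \<Rightarrow> real"
  assumes "0 \<le> t" "0 < K" "continuous_on {0..t} \<phi>"
    and "\<And>r. r \<in> {0..t} \<Longrightarrow> \<bar>\<phi> r\<bar> \<le> A * exp (K * r)"
  shows "\<bar>integral {0..t} \<phi>\<bar> \<le> A * exp (K * t) / K"
proof -
  have "((\<lambda>r. A * exp (K * r)) has_integral (A * exp (K * t) / K - A / K)) {0..t}"
  proof -
    have "((\<lambda>r. A * exp (K * r) / K) has_vector_derivative A * exp (K * r)) (at r within {0..t})" for r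
      unfolding has_real_derivative_iff_has_vector_derivative[symmetric]
      using assms(2) by (auto intro!: derivative_eq_intros)
    from fundamental_theorem_of_calculus[OF assms(1) this] show ?thesis by simp
  qed
  note bound = this
  have "\<bar>integral {0..t} \<phi>\<bar> \<le> integral {0..t} (\<lambda>r. A * exp (K * r))"
    using integral_norm_bound_integral[of \<phi> "{0..t}" "\<lambda>r. A * exp (K * r)"]
      integrable_continuous_interval[OF assms(3)] has_integral_integrable[OF bound] assms(4)
    by simp
  also have "\<dots> = A * exp (K * t) / K - A / K" using bound by (rule integral_unique)
  also have "\<dots> \<le> A * exp (K * t) / K"
    using assms(1,2) order_trans[OF abs_ge_zero assms(4)[of 0]] by simp
  finally show ?thesis .
qed

lemma ext_cont_in_bcontfun:
  fixes g :: "real \<Rightarrow> 'a::metric_space"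
  assumes "continuous_on {a..b} g"
  shows "ext_cont g a b \<in> bcontfun"
proof -
  obtain z :: "real \<Rightarrow>\<^sub>C 'a" where "\<And>x. z x = g (clamp a b x)"
    using continuous_on_cbox_bcontfunE[of a b g] assms by auto
  then have "ext_cont g a b = apply_bcontfun z" by (auto simp: ext_cont_def)
  then show ?thesis using apply_bcontfun by simp
qed

lemma two_zeros_between_sign_changes:
  fixes g :: "real \<Rightarrow> real"
  assumes "continuous_on {a..b} g" "a < m" "m < b" "0 < g a" "g m < 0" "0 < g b"
  obtains x1 x2 where "a < x1" "x1 < m" "m < x2" "x2 < b" "g x1 = 0" "g x2 = 0"
proof -
  obtain x1 where "a \<le> x1" "x1 \<le> m" "g x1 = 0"
    using IVT2'[of g m 0 a] assms continuous_on_subset[OF assms(1), of "{a..m}"] by auto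
  moreover obtain x2 where "m \<le> x2" "x2 \<le> b" "g x2 = 0"
    using IVT'[of g m 0 b] assms continuous_on_subset[OF assms(1), of "{m..b}"] by auto
  ultimately show ?thesis
    using that assms(4-6) by (metis order.strict_iff_order less_irrefl)
qed

lemma lipschitz_powr_Icc:
  assumes "1 \<le> p" "0 < M"
  shows "(p * M powr (p - 1))-lipschitz_on {0..M} (\<lambda>x. x powr p)"
proof -
  have "(p * M powr (p - 1))-lipschitz_on {0<..M} (\<lambda>x. x powr p)"
  proof (rule lipschitz_onI)
    fix x y :: real assume "x \<in> {0<..M}" "y \<in> {0<..M}"
    have "((\<lambda>x. x powr p) has_real_derivative p * z powr (p - 1)) (at z within {0<..M})"
      if "z \<in> {0<..M}" for z
      using has_real_derivative_powr[of z p] that by (auto intro: has_field_derivative_at_within)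
    moreover have "norm (p * z powr (p - 1)) \<le> p * M powr (p - 1)" if "z \<in> {0<..M}" for z
      using that assms by (auto intro!: mult_left_mono powr_mono2)
    ultimately have "norm (x powr p - y powr p) \<le> p * M powr (p - 1) * norm (x - y)"
      using \<open>x \<in> {0<..M}\<close> \<open>y \<in> {0<..M}\<close>
      by (intro field_differentiable_bound[of "{0<..M}" "\<lambda>x. x powr p" "\<lambda>z. p * z powr (p - 1)"]) auto
    then show "dist (x powr p) (y powr p) \<le> p * M powr (p - 1) * dist x y"
      by (simp add: dist_norm)
  qed (use assms in simp)
  moreover have "continuous_on {0..M} (\<lambda>x::real. x powr p)"
    using assms by (intro continuous_on_powr') auto
  ultimately show ?thesis
    using lipschitz_on_closure[of _ "{0<..M}"] assms by simp
qed

section \<open>Second-order equations and concavity\<close>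

definition ode2_sol ::
    "(real \<Rightarrow> real \<Rightarrow> real) \<Rightarrow> real set \<Rightarrow> (real \<Rightarrow> real) \<Rightarrow> (real \<Rightarrow> real) \<Rightarrow> bool" where
  "ode2_sol f I v dv \<longleftrightarrow>
     (\<forall>s\<in>I. (v has_real_derivative dv s) (at s within I) \<and>
             (dv has_real_derivative - f s (v s)) (at s within I))"

lemma ode_sol_eq_ode2_sol: "ode_sol h p = ode2_sol (nl h p)"
  by (intro ext) (simp add: ode_sol_def ode2_sol_def)

lemma ode2_solD:
  assumes "ode2_sol f I v dv" "s \<in> I"
  shows "(v has_real_derivative dv s) (at s within I)"
    and "(dv has_real_derivative - f s (v s)) (at s within I)"
  using assms by (auto simp: ode2_sol_def)

lemma ode2_sol_subset: "ode2_sol f I v dv \<Longrightarrow> J \<subseteq> I \<Longrightarrow> ode2_sol f J v dv"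
  by (auto simp: ode2_sol_def intro: DERIV_subset)

lemma ode_sol_subset: "ode_sol h p I w dw \<Longrightarrow> J \<subseteq> I \<Longrightarrow> ode_sol h p J w dw"
  by (simp add: ode_sol_eq_ode2_sol ode2_sol_subset)

lemma ode2_sol_cong:
  "(\<And>s. s \<in> I \<Longrightarrow> f s (v s) = g s (v s)) \<Longrightarrow> ode2_sol f I v dv \<longleftrightarrow> ode2_sol g I v dv"
  by (simp add: ode2_sol_def)

lemma ode2_sol_continuous_on:
  assumes "ode2_sol f I v dv"
  shows "continuous_on I v"
  unfolding continuous_on_eq_continuous_within
  using DERIV_continuous[OF ode2_solD(1)[OF assms]] by blast

lemma ode2_sol_deriv_antimono:
  assumes "ode2_sol f {a..b} v dv" "\<And>s. s \<in> {a..b} \<Longrightarrow> 0 \<le> f s (v s)"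
  shows "antimono_on {a..b} dv"
proof (rule monotone_onI)
  fix x y assume xy: "x \<in> {a..b}" "y \<in> {a..b}" "x \<le> y"
  have "- dv x \<le> - dv y"
  proof (rule deriv_nonneg_imp_le[of x y "{a..b}"])
    fix s assume "s \<in> {x..y}"
    then have "s \<in> {a..b}" using xy by auto
    then show "((\<lambda>s. - dv s) has_real_derivative f s (v s)) (at s within {a..b})"
      using DERIV_minus[OF ode2_solD(2)[OF assms(1)]] by simp
  qed (use xy assms(2) in auto)
  then show "dv y \<le> dv x" by simp
qed

context
  fixes v dv :: "real \<Rightarrow> real" and d :: real
  assumes deriv: "\<And>t. t \<in> {0..d} \<Longrightarrow> (v has_real_derivative dv t) (at t within {0..d})"
    and deriv_antimono: "antimono_on {0..d} dv"
begin

lemma below_tangent_at_0: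
  assumes "t \<in> {0..d}"
  shows "v t \<le> v 0 + dv 0 * t"
proof -
  have "dv 0 * 0 - v 0 \<le> dv 0 * t - v t"
  proof (rule deriv_nonneg_imp_le[of 0 t "{0..d}" _ "\<lambda>s. dv 0 - dv s"])
    fix s assume s: "s \<in> {0..t}"
    then show "((\<lambda>s. dv 0 * s - v s) has_real_derivative dv 0 - dv s) (at s within {0..d})"
      using assms deriv[of s] by (auto intro!: derivative_eq_intros)
    show "0 \<le> dv 0 - dv s"
      using s assms monotone_onD[OF deriv_antimono, of 0 s] by auto
  qed (use assms in auto)
  then show ?thesis by simp
qed

lemma pos_before_zero:
  assumes "v 0 = 0" "0 < dv 0" "0 < s" "s < b" "b \<le> d" "v b = 0"
  shows "0 < v s"
proof (rule ccontr)
  assume "\<not> 0 < v s"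
  \<comment> \<open>Then dv is nonnegative at some point right of s, so v is nondecreasing on [0, s],
    contradicting v 0 = 0 < dv 0.\<close>
  obtain t where t: "t \<in> {s<..<b}" "v b - v s = dv t * (b - s)"
    using mvt_real_within[of s b "{0..d}" v dv] assms deriv by auto
  with \<open>\<not> 0 < v s\<close> assms have "0 \<le> dv t * (b - s)" by simp
  with t(1) have "0 \<le> dv t" by (simp add: zero_le_mult_iff)
  have v_le: "v r \<le> v s" if "r \<in> {0..s}" for r
  proof (rule deriv_nonneg_imp_le[of r s "{0..d}" v dv])
    fix q assume "q \<in> {r..s}"
    then show "0 \<le> dv q"
      using that t assms \<open>0 \<le> dv t\<close> monotone_onD[OF deriv_antimono, of q t] by auto
  qed (use that assms deriv in auto)
  obtain \<delta> where "\<delta> > 0" and \<delta>: "\<And>e. 0 < e \<Longrightarrow> e \<in> {0..d} \<Longrightarrow> e < \<delta> \<Longrightarrow> v 0 < v e"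
    using has_real_derivative_pos_inc_right[OF deriv[of 0] \<open>0 < dv 0\<close>] assms by auto
  define e where "e = min (\<delta> / 2) s"
  have "0 < e" "e \<in> {0..d}" "e < \<delta>" "e \<in> {0..s}"
    using \<open>\<delta> > 0\<close> assms by (auto simp: e_def)
  then show False using \<delta> v_le[of e] \<open>\<not> 0 < v s\<close> assms(1) by fastforce
qed

lemma neg_after_zero:
  assumes "v 0 = 0" "0 < dv 0" "0 < s" "s < d" "v s = 0"
  shows "v d < 0"
proof -
  obtain \<xi> where \<xi>: "\<xi> \<in> {0<..<s}" "v s - v 0 = dv \<xi> * (s - 0)"
    using mvt_real_within[of 0 s "{0..d}" v dv] assms deriv by auto
  then have "dv \<xi> = 0" using assms by simp
  have "- v s \<le> - v d"
  proof (rule deriv_nonneg_imp_le[of s d "{0..d}" _ "\<lambda>q. - dv q"])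
    fix q assume "q \<in> {s..d}"
    then show "0 \<le> - dv q"
      using \<xi> \<open>dv \<xi> = 0\<close> monotone_onD[OF deriv_antimono, of \<xi> q] by auto
  qed (use assms deriv in \<open>auto intro: DERIV_minus\<close>)
  moreover have "v d \<noteq> 0" using pos_before_zero[of s d] assms by auto
  ultimately show ?thesis using assms(5) by simp
qed

end

section \<open>The initial value problem\<close>

locale ode2_ivp =
  fixes f :: "real \<Rightarrow> real \<Rightarrow> real" and d L :: real
  assumes d_pos: "0 < d"
    and f_cont: "continuous_on ({0..d} \<times> UNIV) (\<lambda>(t, x). f t x)"
    and f_lipschitz: "\<And>t. t \<in> {0..d} \<Longrightarrow> L-lipschitz_on UNIV (f t)"
begin

lemma subinterval: "0 < e \<Longrightarrow> e \<le> d \<Longrightarrow> ode2_ivp f e L"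
  by unfold_locales (auto intro: continuous_on_subset[OF f_cont] f_lipschitz)

lemma L_nonneg: "0 \<le> L"
  using lipschitz_on_nonneg[OF f_lipschitz[of 0]] d_pos by simp

(* A function v on [0, d] is encoded by the bounded continuous z with v t = exp (K * t) * z t,
   extended constantly outside [0, d] by ext_cont.  In this weighted sup norm the double integral
   in the Picard map gains a factor 1 / K^2, and K is chosen so that L / K^2 <= 1 / 2. *)
definition K :: real where
  "K = sqrt (2 * L) + 1"

lemma K_pos: "0 < K"
  using L_nonneg by (simp add: K_def add_nonneg_pos)

lemma K_square: "2 * L \<le> K\<^sup>2"
proof -
  have "K\<^sup>2 = 2 * L + 2 * sqrt (2 * L) + 1"
    using L_nonneg by (simp add: K_def power2_eq_square algebra_simps)
  then show ?thesis using L_nonneg by simp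
qed

definition weighted :: "(real \<Rightarrow>\<^sub>C real) \<Rightarrow> real \<Rightarrow> real" where
  "weighted z t = exp (K * t) * z t"

definition force :: "(real \<Rightarrow>\<^sub>C real) \<Rightarrow> real \<Rightarrow> real" where
  "force z t = f t (weighted z t)"

definition force_int :: "(real \<Rightarrow>\<^sub>C real) \<Rightarrow> real \<Rightarrow> real" where
  "force_int z = (\<lambda>t. integral {0..t} (force z))"

definition force_iint :: "(real \<Rightarrow>\<^sub>C real) \<Rightarrow> real \<Rightarrow> real" where
  "force_iint z = (\<lambda>t. integral {0..t} (force_int z))"

definition picard :: "real \<Rightarrow> (real \<Rightarrow>\<^sub>C real) \<Rightarrow> real \<Rightarrow>\<^sub>C real" where
  "picard a z = Bcontfun (ext_cont (\<lambda>t. exp (- (K * t)) * (a * t - force_iint z t)) 0 d)"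

lemma continuous_on_force: "continuous_on {0..d} (force z)"
proof -
  have "continuous_on {0..d} (\<lambda>t. (t, weighted z t))"
    unfolding weighted_def by (intro continuous_intros continuous_on_apply_bcontfun)
  from continuous_on_compose2[OF f_cont this] show ?thesis
    by (auto simp: force_def)
qed

lemma force_int_deriv:
  "t \<in> {0..d} \<Longrightarrow> (force_int z has_real_derivative force z t) (at t within {0..d})"
  unfolding force_int_def by (rule integral_has_real_derivative[OF continuous_on_force])

lemma continuous_on_force_int: "continuous_on {0..d} (force_int z)"
  unfolding continuous_on_eq_continuous_within
  using DERIV_continuous[OF force_int_deriv] by blast

lemma force_iint_deriv:
  "t \<in> {0..d} \<Longrightarrow> (force_iint z has_real_derivative force_int z t) (at t within {0..d})"
  unfolding force_iint_def by (rule integral_has_real_derivative[OF continuous_on_force_int])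

lemma continuous_on_force_iint: "continuous_on {0..d} (force_iint z)"
  unfolding continuous_on_eq_continuous_within
  using DERIV_continuous[OF force_iint_deriv] by blast

lemma picard_apply:
  "picard a z s = exp (- (K * clamp 0 d s)) * (a * clamp 0 d s - force_iint z (clamp 0 d s))"
proof -
  have "continuous_on {0..d} (\<lambda>t. exp (- (K * t)) * (a * t - force_iint z t))"
    by (intro continuous_intros continuous_on_force_iint)
  from Bcontfun_inverse[OF ext_cont_in_bcontfun[OF this]] show ?thesis
    by (simp add: picard_def ext_cont_def)
qed

lemma clamp_Icc: "clamp 0 d s \<in> {0..d}" "s \<in> {0..d} \<Longrightarrow> clamp 0 d s = s"
  using clamp_in_interval[of 0 d s] clamp_cancel_cbox[of s 0 d] d_pos by auto

lemma force_diff: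
  assumes "t \<in> {0..d}"
  shows "\<bar>force z1 t - force z2 t\<bar> \<le> L * dist z1 z2 * exp (K * t)"
proof -
  have "\<bar>weighted z1 t - weighted z2 t\<bar> = exp (K * t) * \<bar>z1 t - z2 t\<bar>"
    by (simp add: weighted_def abs_mult flip: right_diff_distrib)
  also have "\<dots> \<le> exp (K * t) * dist z1 z2"
    using dist_bounded[of z1 t z2] by (simp add: dist_real_def)
  finally have "L * \<bar>weighted z1 t - weighted z2 t\<bar> \<le> L * (exp (K * t) * dist z1 z2)"
    using L_nonneg by (rule mult_left_mono)
  moreover have "\<bar>force z1 t - force z2 t\<bar> \<le> L * \<bar>weighted z1 t - weighted z2 t\<bar>"
    using lipschitz_onD[OF f_lipschitz[OF assms]] by (simp add: force_def dist_real_def)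
  ultimately show ?thesis by (simp add: mult_ac)
qed

lemma force_int_diff:
  assumes "t \<in> {0..d}"
  shows "\<bar>force_int z1 t - force_int z2 t\<bar> \<le> L * dist z1 z2 / K * exp (K * t)"
proof -
  have sub: "{0..t} \<subseteq> {0..d}" using assms by auto
  have "force_int z1 t - force_int z2 t = integral {0..t} (\<lambda>r. force z1 r - force z2 r)"
    unfolding force_int_def
    by (rule integral_diff[symmetric];
        intro integrable_continuous_interval continuous_on_subset[OF continuous_on_force sub])
  also have "\<bar>\<dots>\<bar> \<le> L * dist z1 z2 * exp (K * t) / K"
    using assms K_pos force_diff sub
    by (intro exp_weighted_integral_bound continuous_intros
        continuous_on_subset[OF continuous_on_force sub]) auto
  finally show ?thesis by simp
qed

lemma force_iint_diff:
  assumes "t \<in> {0..d}"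
  shows "\<bar>force_iint z1 t - force_iint z2 t\<bar> \<le> L * dist z1 z2 / K\<^sup>2 * exp (K * t)"
proof -
  have sub: "{0..t} \<subseteq> {0..d}" using assms by auto
  have "force_iint z1 t - force_iint z2 t = integral {0..t} (\<lambda>r. force_int z1 r - force_int z2 r)"
    unfolding force_iint_def
    by (rule integral_diff[symmetric];
        intro integrable_continuous_interval continuous_on_subset[OF continuous_on_force_int sub])
  also have "\<bar>\<dots>\<bar> \<le> L * dist z1 z2 / K * exp (K * t) / K"
    using assms K_pos force_int_diff sub
    by (intro exp_weighted_integral_bound continuous_intros
        continuous_on_subset[OF continuous_on_force_int sub]) auto
  finally show ?thesis by (simp add: power2_eq_square)
qed

lemma picard_contraction: "dist (picard a z1) (picard a z2) \<le> 1/2 * dist z1 z2"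
proof (rule dist_bound)
  fix s
  define t where "t = clamp 0 d s"
  have t: "t \<in> {0..d}" using clamp_Icc by (simp add: t_def)
  have "dist (picard a z1 s) (picard a z2 s) = exp (- (K * t)) * \<bar>force_iint z1 t - force_iint z2 t\<bar>"
    by (simp add: picard_apply dist_real_def abs_mult flip: t_def right_diff_distrib)
  also have "\<dots> \<le> exp (- (K * t)) * (L * dist z1 z2 / K\<^sup>2 * exp (K * t))"
    using force_iint_diff[OF t] by (intro mult_left_mono) auto
  also have "\<dots> = L * dist z1 z2 / K\<^sup>2"
    by (simp add: exp_minus field_simps)
  also have "\<dots> \<le> 1/2 * dist z1 z2"
  proof -
    have "2 * L * dist z1 z2 \<le> K\<^sup>2 * dist z1 z2"
      by (rule mult_right_mono[OF K_square]) simp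
    then show ?thesis using K_pos by (simp add: field_simps)
  qed
  finally show "dist (picard a z1 s) (picard a z2 s) \<le> 1/2 * dist z1 z2" .
qed

lemma picard_dist_slope: "dist (picard a z) (picard b z) \<le> d * \<bar>a - b\<bar>"
proof (rule dist_bound)
  fix s
  define t where "t = clamp 0 d s"
  have t: "0 \<le> t" "t \<le> d" using clamp_Icc by (auto simp: t_def)
  have "exp (- (K * t)) * (a * t - force_iint z t) - exp (- (K * t)) * (b * t - force_iint z t)
      = exp (- (K * t)) * (t * (a - b))"
    by (simp add: algebra_simps)
  then have "dist (picard a z s) (picard b z s) = exp (- (K * t)) * (t * \<bar>a - b\<bar>)"
    using t by (simp add: picard_apply dist_real_def abs_mult flip: t_def)
  also have "\<dots> \<le> 1 * (d * \<bar>a - b\<bar>)"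
    using t K_pos by (intro mult_mono mult_right_mono) auto
  finally show "dist (picard a z s) (picard b z s) \<le> d * \<bar>a - b\<bar>" by simp
qed

definition fixp :: "real \<Rightarrow> real \<Rightarrow>\<^sub>C real" where
  "fixp a = (THE z. picard a z = z)"

lemma picard_unique_fixpoint: "\<exists>!z. picard a z = z"
  by (rule banach_fix_type[of "1/2"]) (use picard_contraction in auto)

lemma picard_fixp: "picard a (fixp a) = fixp a"
  unfolding fixp_def using picard_unique_fixpoint by (rule theI')

lemma fixp_unique: "picard a z = z \<Longrightarrow> z = fixp a"
  using picard_unique_fixpoint picard_fixp by blast

lemma fixp_dist: "dist (fixp a) (fixp b) \<le> 2 * d * \<bar>a - b\<bar>"
proof -
  have "dist (fixp a) (fixp b) = dist (picard a (fixp a)) (picard b (fixp b))"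
    by (simp add: picard_fixp)
  also have "\<dots> \<le> dist (picard a (fixp a)) (picard b (fixp a)) + dist (picard b (fixp a)) (picard b (fixp b))"
    by (rule dist_triangle)
  also have "\<dots> \<le> d * \<bar>a - b\<bar> + 1/2 * dist (fixp a) (fixp b)"
    by (intro add_mono picard_dist_slope picard_contraction)
  finally show ?thesis by simp
qed

definition sol :: "real \<Rightarrow> real \<Rightarrow> real" where
  "sol a t = a * t - force_iint (fixp a) t"

definition dsol :: "real \<Rightarrow> real \<Rightarrow> real" where
  "dsol a t = a - force_int (fixp a) t"

lemma sol_0 [simp]: "sol a 0 = 0" and dsol_0 [simp]: "dsol a 0 = a"
  by (simp_all add: sol_def dsol_def force_iint_def force_int_def)

lemma weighted_fixp: "t \<in> {0..d} \<Longrightarrow> weighted (fixp a) t = sol a t"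
  using arg_cong[OF picard_fixp, of "\<lambda>z. z t" a]
  by (simp add: picard_apply clamp_Icc weighted_def sol_def exp_minus field_simps)

lemma ode2_sol_sol: "ode2_sol f {0..d} (sol a) (dsol a)"
  unfolding ode2_sol_def
proof safe
  fix t :: real assume t: "t \<in> {0..d}"
  show "(sol a has_real_derivative dsol a t) (at t within {0..d})"
    unfolding sol_def[abs_def] dsol_def using force_iint_deriv[OF t]
    by (auto intro!: derivative_eq_intros)
  show "(dsol a has_real_derivative - f t (sol a t)) (at t within {0..d})"
    unfolding dsol_def[abs_def] using force_int_deriv[OF t] weighted_fixp[OF t]
    by (auto simp: force_def intro!: derivative_eq_intros)
qed

lemma sol_unique:
  assumes sol: "ode2_sol f {0..d} v dv" and "v 0 = 0" "t \<in> {0..d}"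
  shows "v t = sol (dv 0) t"
proof -
  define a where "a = dv 0"
  have cont: "continuous_on {0..d} (\<lambda>t. exp (- (K * t)) * v t)"
    by (intro continuous_intros ode2_sol_continuous_on[OF sol])
  define z where "z = Bcontfun (ext_cont (\<lambda>t. exp (- (K * t)) * v t) 0 d)"
  have z: "z s = exp (- (K * clamp 0 d s)) * v (clamp 0 d s)" for s
    unfolding z_def Bcontfun_inverse[OF ext_cont_in_bcontfun[OF cont]] by (simp add: ext_cont_def)
  have weighted_z: "weighted z s = v s" if "s \<in> {0..d}" for s
    using that by (simp add: weighted_def z clamp_Icc exp_minus)
  have dv_eq: "dv s = a - force_int z s" if "s \<in> {0..d}" for s
  proof (rule deriv_eq_imp_eq_on_Icc[OF _ _ _ that])
    fix r assume r: "r \<in> {0..d}"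
    show "(dv has_real_derivative - f r (v r)) (at r within {0..d})"
      by (rule ode2_solD(2)[OF sol r])
    have "((\<lambda>s. a - force_int z s) has_real_derivative - force z r) (at r within {0..d})"
      using DERIV_diff[OF DERIV_const force_int_deriv[OF r], of a] by simp
    then show "((\<lambda>s. a - force_int z s) has_real_derivative - f r (v r)) (at r within {0..d})"
      using weighted_z[OF r] by (simp add: force_def)
  qed (simp add: a_def force_int_def)
  have v_eq: "v s = a * s - force_iint z s" if "s \<in> {0..d}" for s
  proof (rule deriv_eq_imp_eq_on_Icc[OF _ _ _ that])
    fix r assume r: "r \<in> {0..d}"
    show "(v has_real_derivative a - force_int z r) (at r within {0..d})"
      using ode2_solD(1)[OF sol r] dv_eq[OF r] by simp
    show "((\<lambda>s. a * s - force_iint z s) has_real_derivative a - force_int z r) (at r within {0..d})"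
      using force_iint_deriv[OF r] by (auto intro!: derivative_eq_intros)
  qed (simp add: \<open>v 0 = 0\<close> force_iint_def)
  have "picard a z = z"
    by (rule bcontfun_eqI) (simp add: picard_apply z v_eq[OF clamp_Icc(1)])
  then have "z = fixp a" by (rule fixp_unique)
  then show ?thesis
    using weighted_fixp[OF assms(3)] weighted_z[OF assms(3)] by (simp add: a_def)
qed

lemma sol_unique_on_subinterval:
  assumes "ode2_sol f {0..e} v dv" "v 0 = 0" "0 < e" "e \<le> d" "t \<in> {0..e}"
  shows "v t = sol (dv 0) t"
proof -
  interpret sub: ode2_ivp f e L by (rule subinterval[OF assms(3,4)])
  have "ode2_sol f {0..e} (sol (dv 0)) (dsol (dv 0))"
    using ode2_sol_subset[OF ode2_sol_sol] assms(4) by auto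
  then show ?thesis
    using sub.sol_unique[OF assms(1,2,5)] sub.sol_unique[of "sol (dv 0)" "dsol (dv 0)" t] assms(5)
    by simp
qed

lemma sol_dist_slope:
  assumes "t \<in> {0..d}"
  shows "\<bar>sol a t - sol b t\<bar> \<le> 2 * d * exp (K * d) * \<bar>a - b\<bar>"
proof -
  have "\<bar>sol a t - sol b t\<bar> = exp (K * t) * \<bar>fixp a t - fixp b t\<bar>"
    by (simp add: weighted_fixp[OF assms, symmetric] weighted_def abs_mult flip: right_diff_distrib)
  also have "\<dots> \<le> exp (K * d) * (2 * d * \<bar>a - b\<bar>)"
    using assms K_pos dist_bounded[of "fixp a" t "fixp b"] fixp_dist[of a b]
    by (intro mult_mono) (auto simp: dist_real_def)
  finally show ?thesis by (simp add: mult_ac)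
qed

lemma continuous_on_sol_slope: "t \<in> {0..d} \<Longrightarrow> continuous_on A (\<lambda>a. sol a t)"
  by (rule lipschitz_on_continuous_on[of "2 * d * exp (K * d)"], rule lipschitz_onI)
    (use sol_dist_slope d_pos in \<open>auto simp: dist_real_def\<close>)

end

section \<open>Shooting for the truncated problem\<close>

definition clipped_pow :: "real \<Rightarrow> real \<Rightarrow> real \<Rightarrow> real" where
  "clipped_pow p M x = max 0 (min M x) powr p"

lemma clipped_pow_nonneg: "0 \<le> clipped_pow p M x"
  by (simp add: clipped_pow_def)

lemma nl_eq_clipped_pow:
  assumes "0 \<le> x" "x \<le> M"
  shows "nl h p t x = h t * clipped_pow p M x"
  using assms by (cases "x = 0") (auto simp: nl_def clipped_pow_def powr_diff)

lemma nl_nonneg: "0 \<le> h t \<Longrightarrow> 0 \<le> x \<Longrightarrow> 0 \<le> nl h p t x"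
  by (simp add: nl_def)

lemma lipschitz_clipped_pow:
  assumes "1 \<le> p" "0 < M"
  shows "(p * M powr (p - 1))-lipschitz_on UNIV (clipped_pow p M)"
proof -
  have "1-lipschitz_on UNIV (\<lambda>x::real. max 0 (min M x))"
    by (rule lipschitz_onI) (auto simp: dist_real_def)
  then have "(p * M powr (p - 1) * 1)-lipschitz_on UNIV (\<lambda>x. max 0 (min M x) powr p)"
    by (rule lipschitz_on_compose2[where g = "\<lambda>y. y powr p"])
      (rule lipschitz_on_subset[OF lipschitz_powr_Icc[OF assms]], use assms in auto)
  then show ?thesis by (simp add: clipped_pow_def[abs_def])
qed

lemma ode2_ivp_clipped_pow:
  assumes "1 < p" "0 < M" "0 < c" "continuous_on {0..c} h"
  obtains L where "ode2_ivp (\<lambda>t x. h t * clipped_pow p M x) c L"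
proof -
  obtain H where H: "\<And>t. t \<in> {0..c} \<Longrightarrow> \<bar>h t\<bar> \<le> H"
    using compact_imp_bounded[OF compact_continuous_image[OF assms(4) compact_Icc]]
    unfolding bounded_iff by (metis image_eqI real_norm_def)
  have lip: "(p * M powr (p - 1))-lipschitz_on UNIV (clipped_pow p M)"
    using lipschitz_clipped_pow assms by simp
  have "continuous_on ({0..c} \<times> UNIV) (\<lambda>y. h (fst y))"
    by (rule continuous_on_compose2[OF assms(4) continuous_on_fst]) auto
  moreover have "continuous_on ({0..c} \<times> UNIV) (\<lambda>y. clipped_pow p M (snd y))"
    by (rule continuous_on_compose2[OF lipschitz_on_continuous_on[OF lip] continuous_on_snd]) auto
  ultimately have "continuous_on ({0..c} \<times> UNIV) (\<lambda>(t, x). h t * clipped_pow p M x)"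
    unfolding case_prod_beta by (rule continuous_on_mult)
  moreover have "(H * (p * M powr (p - 1)))-lipschitz_on UNIV (\<lambda>x. h t * clipped_pow p M x)"
    if "t \<in> {0..c}" for t
    by (rule lipschitz_on_cmult_real_upper[OF lip H[OF that]])
  ultimately have "ode2_ivp (\<lambda>t x. h t * clipped_pow p M x) c (H * (p * M powr (p - 1)))"
    using assms(3) by (intro ode2_ivp.intro) auto
  then show ?thesis by (rule that)
qed

locale clipped_shooting = ode2_ivp "\<lambda>t x. h t * clipped_pow p M x" c L
  for h :: "real \<Rightarrow> real" and p M c L :: real +
  assumes h_nonneg: "\<And>t. t \<in> {0..c} \<Longrightarrow> 0 \<le> h t"
begin

lemma dsol_antimono: "antimono_on {0..c} (dsol a)"
  by (rule ode2_sol_deriv_antimono[OF ode2_sol_sol]) (simp add: h_nonneg clipped_pow_nonneg)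

lemmas sol_deriv = ode2_solD(1)[OF ode2_sol_sol]

lemma sol_vanishing_at_c:
  assumes "0 < a" "a * c \<le> M" "sol a c = 0"
  shows "ode_sol h p {0..c} (sol a) (dsol a)" and "\<And>s. 0 < s \<Longrightarrow> s < c \<Longrightarrow> 0 < sol a s"
proof -
  show pos: "0 < sol a s" if "0 < s" "s < c" for s
    using pos_before_zero[OF sol_deriv dsol_antimono, of a s c] assms that by simp
  have "sol a t \<le> M" if "t \<in> {0..c}" for t
  proof -
    have "sol a t \<le> a * t"
      using below_tangent_at_0[OF sol_deriv dsol_antimono that] by simp
    also have "\<dots> \<le> a * c" using that assms(1) by (intro mult_left_mono) auto
    finally show ?thesis using assms(2) by simp
  qed
  moreover have "0 \<le> sol a t" if "t \<in> {0..c}" for t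
    using pos[of t] that assms(3) by (cases "t = 0 \<or> t = c") auto
  ultimately have "nl h p t (sol a t) = h t * clipped_pow p M (sol a t)" if "t \<in> {0..c}" for t
    using that by (simp add: nl_eq_clipped_pow)
  then show "ode_sol h p {0..c} (sol a) (dsol a)"
    unfolding ode_sol_eq_ode2_sol by (subst ode2_sol_cong) (auto simp: ode2_sol_sol)
qed

lemma nonneg_ode_sol_eq_sol:
  assumes sol: "ode_sol h p {0..e} v dv" and "0 < e" "e \<le> c" "v 0 = 0"
    and nonneg: "\<And>t. t \<in> {0..e} \<Longrightarrow> 0 \<le> v t" and "0 \<le> dv 0" "dv 0 * c \<le> M"
    and t: "t \<in> {0..e}"
  shows "v t = sol (dv 0) t"
proof -
  have sol2: "ode2_sol (nl h p) {0..e} v dv" using sol by (simp add: ode_sol_eq_ode2_sol)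
  have "antimono_on {0..e} dv"
    using \<open>e \<le> c\<close> by (intro ode2_sol_deriv_antimono[OF sol2] nl_nonneg h_nonneg nonneg) auto
  then have "v s \<le> M" if "s \<in> {0..e}" for s
  proof -
    have "v s \<le> dv 0 * s"
      using below_tangent_at_0[OF ode2_solD(1)[OF sol2] \<open>antimono_on _ _\<close> that] \<open>v 0 = 0\<close> by simp
    also have "\<dots> \<le> dv 0 * c" using that \<open>e \<le> c\<close> \<open>0 \<le> dv 0\<close> by (intro mult_left_mono) auto
    finally show ?thesis using \<open>dv 0 * c \<le> M\<close> by simp
  qed
  then have "ode2_sol (\<lambda>t x. h t * clipped_pow p M x) {0..e} v dv"
    using sol2 nonneg by (subst ode2_sol_cong[symmetric]) (auto simp: nl_eq_clipped_pow)
  then show ?thesis using sol_unique_on_subinterval \<open>v 0 = 0\<close> \<open>0 < e\<close> \<open>e \<le> c\<close> t by blast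
qed

lemma sol_pos_at_c:
  assumes "ode_sol h p {0..c} v dv" "v 0 = 0" "\<And>s. 0 < s \<Longrightarrow> s \<le> c \<Longrightarrow> 0 < v s"
    and "0 \<le> dv 0" "dv 0 * c \<le> M"
  shows "0 < sol (dv 0) c"
proof -
  have "0 \<le> v t" if "t \<in> {0..c}" for t
    using that assms(2) assms(3)[of t] by (cases "t = 0") auto
  then have "v c = sol (dv 0) c"
    using d_pos by (intro nonneg_ode_sol_eq_sol[OF assms(1)] assms(2,4,5)) auto
  then show ?thesis using assms(3)[of c] d_pos by simp
qed

lemma sol_neg_at_c:
  assumes "ode_sol h p {0..s} v dv" "v 0 = 0" "\<And>r. 0 < r \<Longrightarrow> r < s \<Longrightarrow> 0 < v r" "v s = 0"
    and "0 < s" "s < c" "0 < dv 0" "dv 0 * c \<le> M"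
  shows "sol (dv 0) c < 0"
proof -
  have "0 \<le> v t" if "t \<in> {0..s}" for t
    using that assms(2,4) assms(3)[of t] by (cases "t = 0 \<or> t = s") auto
  then have "sol (dv 0) s = 0"
    using assms by (metis nonneg_ode_sol_eq_sol atLeastAtMost_iff less_imp_le order_refl)
  then show ?thesis
    using neg_after_zero[OF sol_deriv dsol_antimono] assms(5-7) by simp
qed

end

theorem lemma2p8:
  fixes h :: "real \<Rightarrow> real" and p s0 :: real
    and wl dwl wu dwu w dw :: "real \<Rightarrow> real"
  assumes "p > 1"
    and "continuous_on {0..} h"
    and "\<And>s. s > 0 \<Longrightarrow> h s > 0"
    and "ode_sol h p {0..} wl dwl" and "ode_sol h p {0..} wu dwu"
    and "wl 0 = 0" and "wu 0 = 0"
    and "0 < dwl 0" and "dwl 0 < dwu 0"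
    and "\<And>s. s > 0 \<Longrightarrow> wl s > 0" and "\<And>s. s > 0 \<Longrightarrow> wu s > 0"
    and "ode_sol h p {0..} w dw"
    and "w 0 = 0" and "dwl 0 < dw 0" and "dw 0 < dwu 0"
    and "s0 > 0" and "\<And>s. 0 < s \<Longrightarrow> s < s0 \<Longrightarrow> w s > 0" and "w s0 = 0"
  shows "\<exists>C>0. \<forall>c\<ge>C. \<exists>w1 dw1 w2 dw2.
           ode_sol h p {0..c} w1 dw1 \<and> w1 0 = 0 \<and> w1 c = 0 \<and> (\<forall>s. 0 < s \<and> s < c \<longrightarrow> w1 s > 0) \<and>
           ode_sol h p {0..c} w2 dw2 \<and> w2 0 = 0 \<and> w2 c = 0 \<and> (\<forall>s. 0 < s \<and> s < c \<longrightarrow> w2 s > 0) \<and>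
           dwl 0 < dw1 0 \<and> dw1 0 < dw 0 \<and> dw 0 < dw2 0 \<and> dw2 0 < dwu 0"
proof (intro exI[of _ "s0 + 1"] conjI allI impI)
  show "0 < s0 + 1" using \<open>s0 > 0\<close> by simp
  fix c assume "s0 + 1 \<le> c"
  then have "s0 < c" "0 < c" using \<open>s0 > 0\<close> by auto
  define M where "M = dwu 0 * c"
  have slope_bound: "a * c \<le> M" if "a \<le> dwu 0" for a
    using that \<open>0 < c\<close> by (simp add: M_def mult_right_mono)
  have "0 < M" using assms(8,9) \<open>0 < c\<close> by (simp add: M_def)
  have "0 \<le> h t" if "t \<in> {0..c}" for t
    using continuous_ge_on_closure[of "{0<..}" h t 0] assms(2,3) that by (simp add: less_imp_le)
  moreover obtain L where "ode2_ivp (\<lambda>t x. h t * clipped_pow p M x) c L"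
    using ode2_ivp_clipped_pow[OF \<open>p > 1\<close> \<open>0 < M\<close> \<open>0 < c\<close> continuous_on_subset[OF assms(2)]] by auto
  ultimately interpret clipped_shooting h p M c L
    by (intro clipped_shooting.intro clipped_shooting_axioms.intro)
  have "0 < sol (dwl 0) c"
    using sol_pos_at_c[OF ode_sol_subset[OF assms(4)]] assms(6,8-10) slope_bound by simp
  moreover have "0 < sol (dwu 0) c"
    using sol_pos_at_c[OF ode_sol_subset[OF assms(5)]] assms(7-9,11) slope_bound by simp
  moreover have "sol (dw 0) c < 0"
    using sol_neg_at_c[OF ode_sol_subset[OF assms(12)], where s = s0] assms(8,13-18) \<open>s0 < c\<close>
      slope_bound[of "dw 0"] by simp
  moreover have "continuous_on {dwl 0..dwu 0} (\<lambda>a. sol a c)"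
    using continuous_on_sol_slope \<open>0 < c\<close> by simp
  ultimately obtain a1 a2
    where "dwl 0 < a1" "a1 < dw 0" "dw 0 < a2" "a2 < dwu 0" "sol a1 c = 0" "sol a2 c = 0"
    using two_zeros_between_sign_changes[of "dwl 0" "dwu 0" "\<lambda>a. sol a c" "dw 0"] assms(14,15)
    by blast
  then show "\<exists>w1 dw1 w2 dw2.
           ode_sol h p {0..c} w1 dw1 \<and> w1 0 = 0 \<and> w1 c = 0 \<and> (\<forall>s. 0 < s \<and> s < c \<longrightarrow> w1 s > 0) \<and>
           ode_sol h p {0..c} w2 dw2 \<and> w2 0 = 0 \<and> w2 c = 0 \<and> (\<forall>s. 0 < s \<and> s < c \<longrightarrow> w2 s > 0) \<and>
           dwl 0 < dw1 0 \<and> dw1 0 < dw 0 \<and> dw 0 < dw2 0 \<and> dw2 0 < dwu 0"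
    using sol_vanishing_at_c[of a1] sol_vanishing_at_c[of a2] slope_bound assms(8)
    by (intro exI[of _ "sol a1"] exI[of _ "dsol a1"] exI[of _ "sol a2"] exI[of _ "dsol a2"]) auto
qed

end
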